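(* Let $d\ge 1$ and let $\mathcal{F}$ be a class of real-valued integrable functions on $[0,1]^d$; for $f\in\mathcal{F}$ write $\mu(f)=\int_{[0,1]^d} f(\boldsymbol{x})\,\mathrm{d}\boldsymbol{x}$. Let $\alpha>1$ and $0<m\le M<\infty$. Suppose that $\mathcal{F}$ has a superlinear worst case lower bound, namely for every $n\ge 1$ and every choice of points $\boldsymbol{x}_1,\dots,\boldsymbol{x}_n\in[0,1]^d$, $$\sup_{f\in\mathcal{F}}\biggl|\frac1n\sum_{i=1}^n f(\boldsymbol{x}_i)-\mu(f)\biggr|> m n^{-\alpha}.$$ Suppose further that there is an infinite sequence of points $\boldsymbol{x}_1,\boldsymbol{x}_2,\dots\in[0,1]^d$ and a strictly increasing sequence of positive integers $n_1<n_2<\cdots$ such that $$\sup_{f\in\mathcal{F}}\biggl|\frac1n\sum_{i=1}^n f(\boldsymbol{x}_i)-\mu(f)\biggr|\le M n^{-\alpha}\quad\text{for all } n\in\{n_1,n_2,\dots\}.$$ Then for every $k\ge1$, the ratio $\rho=\rho_k=n_{k+1}/n_k$ satisfies $$\rho \ge 1 + \biggl[\frac{m}{M}\bigl(1+\rho^{1-\alpha}\bigr)^{-1}\biggr]^{1/(\alpha-1)} > 1 + \Bigl(\frac{m}{2M}\Bigr)^{1/(\alpha-1)}.$$ *)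

theory Defs
  imports "HOL-Analysis.Analysis"
begin

text \<open>The unit cube [0,1]^d, with d = CARD('d) (a finite index type).\<close>
definition unit_cube :: "(real ^ 'd) set" where
  "unit_cube = {x. \<forall>i. 0 \<le> x $ i \<and> x $ i \<le> 1}"

definition mu :: "(real ^ 'd \<Rightarrow> real) \<Rightarrow> real" where
  "mu f = integral unit_cube f"

definition wc_err :: "(real ^ 'd \<Rightarrow> real) set \<Rightarrow> (nat \<Rightarrow> real ^ 'd) \<Rightarrow> nat \<Rightarrow> ereal" where
  "wc_err F p n = (SUP f\<in>F. ereal \<bar>(\<Sum>i<n. f (p i)) / real n - mu f\<bar>)"

end

theory Submission
  imports Defs
begin

text \<open>Let \<open>N = n\<^sub>k\<close>, \<open>N' = n\<^sub>k\<^sub>+\<^sub>1\<close> and \<open>r = N' - N\<close>. The points \<open>x\<^sub>N, \<dots>, x\<^sub>N\<^sub>'\<^sub>-\<^sub>1\<close>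
  form an \<open>r\<close>-point rule whose error is, by the triangle inequality, at most
  \<open>(N' e(N') + N e(N)) / r \<le> M (N\<^sup>1\<^sup>-\<^sup>\<alpha> + N'\<^sup>1\<^sup>-\<^sup>\<alpha>) / r\<close>, while the lower bound makes it
  exceed \<open>m r\<^sup>-\<^sup>\<alpha>\<close>. Dividing \<open>m r\<^sup>1\<^sup>-\<^sup>\<alpha> < M (N\<^sup>1\<^sup>-\<^sup>\<alpha> + N'\<^sup>1\<^sup>-\<^sup>\<alpha>)\<close> by \<open>N\<^sup>1\<^sup>-\<^sup>\<alpha>\<close> gives
  \<open>m (\<rho> - 1)\<^sup>1\<^sup>-\<^sup>\<alpha> < M (1 + \<rho>\<^sup>1\<^sup>-\<^sup>\<alpha>)\<close>, which is the claim; the weaker bound uses \<open>\<rho>\<^sup>1\<^sup>-\<^sup>\<alpha> < 1\<close>.\<close>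

lemma wc_err_le_iff:
  "wc_err F p n \<le> ereal B \<longleftrightarrow> (\<forall>f\<in>F. \<bar>(\<Sum>i<n. f (p i)) / real n - mu f\<bar> \<le> B)"
  by (simp add: wc_err_def SUP_le_iff)

lemma abs_mean_error_tail_le:
  fixes a b \<mu> :: real and N N' :: nat
  assumes "0 < N" "N < N'"
  shows "\<bar>b / real (N' - N) - \<mu>\<bar>
           \<le> (N' * \<bar>(a + b) / N' - \<mu>\<bar> + N * \<bar>a / N - \<mu>\<bar>) / real (N' - N)"
proof -
  have r: "real (N' - N) = real N' - real N" "real (N' - N) > 0"
    using assms by simp_all
  have "b / real (N' - N) - \<mu> = (N' * ((a + b) / N' - \<mu>) - N * (a / N - \<mu>)) / real (N' - N)"
    using assms r by (simp add: field_simps)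
  also have "\<bar>\<dots>\<bar> \<le> (N' * \<bar>(a + b) / N' - \<mu>\<bar> + N * \<bar>a / N - \<mu>\<bar>) / real (N' - N)"
    using r(2) abs_triangle_ineq4[of "N' * ((a + b) / N' - \<mu>)" "N * (a / N - \<mu>)"]
    by (simp add: abs_mult divide_right_mono del: of_nat_diff)
  finally show ?thesis .
qed

text \<open>The rule formed by the points \<open>p N, \<dots>, p (N' - 1)\<close> is the difference of two
  consecutive equal-weight rules.\<close>
lemma wc_err_shift_le:
  assumes "0 < N" "N < N'"
    and err_N: "wc_err F p N \<le> ereal e" and err_N': "wc_err F p N' \<le> ereal e'"
  shows "wc_err F (\<lambda>i. p (N + i)) (N' - N) \<le> ereal ((N' * e' + N * e) / real (N' - N))"
  unfolding wc_err_le_iff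
proof
  fix f assume "f \<in> F"
  let ?S = "\<lambda>k. \<Sum>i<k. f (p i)" and ?T = "\<Sum>i<N' - N. f (p (N + i))"
  have split: "?S N' = ?S N + ?T"
  proof -
    have "?S (N + r) = ?S N + (\<Sum>i<r. f (p (N + i)))" for r
      by (induct r) (auto simp: add.assoc)
    then show ?thesis using assms(2) by (metis le_add_diff_inverse less_imp_le)
  qed
  have "\<bar>?S N / N - mu f\<bar> \<le> e" "\<bar>?S N' / N' - mu f\<bar> \<le> e'"
    using err_N err_N' \<open>f \<in> F\<close> by (auto simp: wc_err_le_iff)
  then have bound: "N' * \<bar>?S N' / N' - mu f\<bar> + N * \<bar>?S N / N - mu f\<bar> \<le> N' * e' + N * e"
    by (intro add_mono mult_left_mono) auto
  have "\<bar>?T / real (N' - N) - mu f\<bar>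
      \<le> (N' * \<bar>?S N' / N' - mu f\<bar> + N * \<bar>?S N / N - mu f\<bar>) / real (N' - N)"
    unfolding split by (rule abs_mean_error_tail_le[OF assms(1,2)])
  also have "\<dots> \<le> (N' * e' + N * e) / real (N' - N)"
    using bound by (intro divide_right_mono) auto
  finally show "\<bar>?T / real (N' - N) - mu f\<bar> \<le> (N' * e' + N * e) / real (N' - N)" .
qed

lemma gap_powr_bound_of_wc_err_bounds:
  assumes "0 < N" "N < N'"
    and lower: "wc_err F (\<lambda>i. p (N + i)) (N' - N) > ereal (m * real (N' - N) powr (-\<alpha>))"
    and upper: "wc_err F p N \<le> ereal (M * real N powr (-\<alpha>))"
      "wc_err F p N' \<le> ereal (M * real N' powr (-\<alpha>))"
  shows "m * (real N' - N) powr (1 - \<alpha>) < M * (N powr (1 - \<alpha>) + N' powr (1 - \<alpha>))"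
proof -
  have r: "real (N' - N) = real N' - N" "real N' - N > 0"
    using assms(2) by simp_all
  have mass: "y * (c * y powr (-\<alpha>)) = c * y powr (1 - \<alpha>)" if "0 \<le> y" for y c :: real
    using powr_mult_base[OF that, of "-\<alpha>"] by (simp add: mult.left_commute)
  note lower
  also have "wc_err F (\<lambda>i. p (N + i)) (N' - N)
      \<le> ereal (M * (N powr (1 - \<alpha>) + N' powr (1 - \<alpha>)) / (real N' - N))"
    using wc_err_shift_le[OF assms(1,2) upper] by (simp add: mass r(1) distrib_left add.commute)
  finally have "(real N' - N) * (m * (real N' - N) powr (-\<alpha>))
      < M * (N powr (1 - \<alpha>) + N' powr (1 - \<alpha>))"
    using r by (simp add: pos_less_divide_eq mult.commute)
  then show ?thesis
    using r(2) by (simp add: mass)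
qed

lemma ratio_gt_of_gap_powr_bound:
  fixes \<alpha> m M a b :: real
  assumes \<alpha>: "\<alpha> > 1" and pos: "0 < m" "0 < M" "0 < a" "a < b"
    and gap: "m * (b - a) powr (1 - \<alpha>) < M * (a powr (1 - \<alpha>) + b powr (1 - \<alpha>))"
  shows "b / a > 1 + ((m / M) * inverse (1 + (b / a) powr (1 - \<alpha>))) powr (1 / (\<alpha> - 1))"
proof -
  define \<rho> t where "\<rho> = b / a" and "t = (b - a) / a"
  have t: "t > 0" and \<rho>: "\<rho> = 1 + t"
    using pos by (simp_all add: t_def \<rho>_def field_simps)
  have q: "1 + \<rho> powr (1 - \<alpha>) > 0"
    by (smt (verit) powr_ge_zero)
  have "(m * t powr (1 - \<alpha>)) * a powr (1 - \<alpha>) < (M * (1 + \<rho> powr (1 - \<alpha>))) * a powr (1 - \<alpha>)"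
    using gap pos by (simp add: t_def \<rho>_def powr_divide algebra_simps)
  then have "m * inverse (t powr (\<alpha> - 1)) < M * (1 + \<rho> powr (1 - \<alpha>))"
    using pos by (simp add: powr_minus[of t "\<alpha> - 1", simplified])
  then have "m < (M * (1 + \<rho> powr (1 - \<alpha>))) * t powr (\<alpha> - 1)"
    using t by (simp add: field_simps)
  then have "m / (M * (1 + \<rho> powr (1 - \<alpha>))) < t powr (\<alpha> - 1)"
    using pos q by (simp add: pos_divide_less_eq mult.commute)
  then have "(m / M) * inverse (1 + \<rho> powr (1 - \<alpha>)) < t powr (\<alpha> - 1)"
    by (simp add: divide_inverse mult.assoc)
  then have "((m / M) * inverse (1 + \<rho> powr (1 - \<alpha>))) powr (1 / (\<alpha> - 1))
      < (t powr (\<alpha> - 1)) powr (1 / (\<alpha> - 1))"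
    using \<alpha> pos q by (intro powr_less_mono2) auto
  also have "\<dots> = t"
    using \<alpha> t by (simp add: powr_powr)
  finally show ?thesis
    using \<rho> \<rho>_def by simp
qed

lemma ratio_bound_gt_half_bound:
  fixes \<alpha> m M \<rho> :: real
  assumes \<alpha>: "\<alpha> > 1" and pos: "0 < m" "0 < M" and \<rho>: "\<rho> > 1"
  shows "1 + ((m / M) * inverse (1 + \<rho> powr (1 - \<alpha>))) powr (1 / (\<alpha> - 1))
           > 1 + (m / (2 * M)) powr (1 / (\<alpha> - 1))"
proof -
  have "\<rho> powr (1 - \<alpha>) < \<rho> powr 0"
    using \<alpha> \<rho> by (intro powr_less_mono) auto
  then have "\<rho> powr (1 - \<alpha>) < 1"
    using \<rho> by simp
  then have "inverse 2 < inverse (1 + \<rho> powr (1 - \<alpha>))"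
    by (intro less_imp_inverse_less) (auto simp: add_pos_nonneg)
  then have "(m / M) * inverse 2 < (m / M) * inverse (1 + \<rho> powr (1 - \<alpha>))"
    using pos by (intro mult_strict_left_mono) auto
  then have "m / (2 * M) < (m / M) * inverse (1 + \<rho> powr (1 - \<alpha>))"
    by simp
  then show ?thesis
    using \<alpha> pos by (simp add: powr_less_mono2)
qed

theorem theorem1:
  fixes F :: "(real ^ 'd \<Rightarrow> real) set"
    and \<alpha> m M :: real
    and x :: "nat \<Rightarrow> real ^ 'd"
    and n :: "nat \<Rightarrow> nat"
  assumes integrable: "\<And>f. f \<in> F \<Longrightarrow> f integrable_on unit_cube"
    and alpha: "\<alpha> > 1"
    and mM: "0 < m" "m \<le> M"
    and lower: "\<And>N p. N \<ge> 1 \<Longrightarrow> (\<forall>i<N. p i \<in> unit_cube) \<Longrightarrow>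
                  wc_err F p N > ereal (m * real N powr (-\<alpha>))"
    and pts: "\<And>i. x i \<in> unit_cube"
    and n_mono: "strict_mono n"
    and n_pos: "n 0 \<ge> 1"
    and upper: "\<And>k. wc_err F x (n k) \<le> ereal (M * real (n k) powr (-\<alpha>))"
  shows "\<forall>k. let \<rho> = real (n (Suc k)) / real (n k) in
           \<rho> \<ge> 1 + ((m / M) * inverse (1 + \<rho> powr (1 - \<alpha>))) powr (1 / (\<alpha> - 1))
         \<and> 1 + ((m / M) * inverse (1 + \<rho> powr (1 - \<alpha>))) powr (1 / (\<alpha> - 1))
             > 1 + (m / (2 * M)) powr (1 / (\<alpha> - 1))"
proof (intro allI)
  fix k
  define N N' where "N = n k" and "N' = n (Suc k)"
  have N: "0 < N" using n_pos strict_mono_less_eq[OF n_mono, of 0 k] by (simp add: N_def)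
  have NN': "N < N'" using n_mono by (simp add: N_def N'_def strict_mono_Suc_iff)
  have M: "0 < M" using mM by simp
  have "wc_err F (\<lambda>i. x (N + i)) (N' - N) > ereal (m * real (N' - N) powr (-\<alpha>))"
    using NN' pts by (intro lower) auto
  then have "m * (real N' - N) powr (1 - \<alpha>) < M * (N powr (1 - \<alpha>) + N' powr (1 - \<alpha>))"
    using upper[of k, folded N_def] upper[of "Suc k", folded N'_def]
    by (intro gap_powr_bound_of_wc_err_bounds[OF N NN']) auto
  then have "real N' / N > 1 + ((m / M) * inverse (1 + (N' / N) powr (1 - \<alpha>))) powr (1 / (\<alpha> - 1))"
    using N NN' by (intro ratio_gt_of_gap_powr_bound[OF alpha mM(1) M]) auto
  moreover have ratio: "real N' / N > 1" using N NN' by simp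
  ultimately show "let \<rho> = real (n (Suc k)) / real (n k) in
           \<rho> \<ge> 1 + ((m / M) * inverse (1 + \<rho> powr (1 - \<alpha>))) powr (1 / (\<alpha> - 1))
         \<and> 1 + ((m / M) * inverse (1 + \<rho> powr (1 - \<alpha>))) powr (1 / (\<alpha> - 1))
             > 1 + (m / (2 * M)) powr (1 / (\<alpha> - 1))"
    using ratio_bound_gt_half_bound[OF alpha mM(1) M ratio]
    unfolding N_def N'_def Let_def by simp
qed

end
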